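(* Let $A$ be a commutative noetherian local ring, let $x,y\in A$ be an exact pair of zero divisors, and let $a\in A$. Then the $A$-modules $G_a$ and $H_a$ are totally reflexive, and $G_a\cong\operatorname{Hom}_A(H_a,A)$ and $H_a\cong\operatorname{Hom}_A(G_a,A)$.
   Context: Two non-units $x,y\in A$ form an exact pair of zero divisors if $\operatorname{Ann}_A(x)=(y)$ and $\operatorname{Ann}_A(y)=(x)$. For $a\in A$, let $\gamma_a=\begin{pmatrix} x & a\\ 0 & y\end{pmatrix}$ and $\eta_a=\begin{pmatrix} y & -a\\ 0 & x\end{pmatrix}$, viewed as $A$-linear maps $A^2\to A^2$ acting on column vectors, and set $G_a=\operatorname{Coker}\gamma_a$, $H_a=\operatorname{Coker}\eta_a$. A finitely generated $A$-module $G$ is totally reflexive if $\operatorname{Ext}^i_A(G,A)=0$ and $\operatorname{Ext}^i_A(\operatorname{Hom}_A(G,A),A)=0$ for all $i>0$, and the biduality map $G\to\operatorname{Hom}_A(\operatorname{Hom}_A(G,A),A)$ is an isomorphism. *)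

theory Defs
  imports "HOL-Algebra.Algebra"
begin

text \<open>Noetherian: the library locale noetherian_ring (HOL-Algebra.Ring_Divisibility).\<close>

definition local_ring :: "('a, 'b) ring_scheme \<Rightarrow> bool" where
  "local_ring R \<longleftrightarrow> (\<exists>!m. maximalideal m R)"

definition ann :: "('a, 'b) ring_scheme \<Rightarrow> 'a \<Rightarrow> 'a set" where
  "ann R x = {z \<in> carrier R. x \<otimes>\<^bsub>R\<^esub> z = \<zero>\<^bsub>R\<^esub>}"

definition exact_zd_pair :: "('a, 'b) ring_scheme \<Rightarrow> 'a \<Rightarrow> 'a \<Rightarrow> bool" where
  "exact_zd_pair R x y \<longleftrightarrow>
     x \<in> carrier R \<and> y \<in> carrier R \<and> x \<notin> Units R \<and> y \<notin> Units R \<and>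
     ann R x = PIdl\<^bsub>R\<^esub> y \<and> ann R y = PIdl\<^bsub>R\<^esub> x"

definition ring_mod :: "('a, 'b) ring_scheme \<Rightarrow> ('a, 'a) module" where
  "ring_mod R = \<lparr>partial_object.carrier = carrier R, monoid.mult = monoid.mult R, monoid.one = monoid.one R,
                 ring.zero = ring.zero R, ring.add = ring.add R, module.smult = monoid.mult R\<rparr>"

definition linear_map ::
  "('a, 'b) ring_scheme \<Rightarrow> ('a, 'm, 'c) module_scheme \<Rightarrow> ('a, 'n, 'd) module_scheme \<Rightarrow> ('m \<Rightarrow> 'n) \<Rightarrow> bool" where
  "linear_map R M N f \<longleftrightarrow>
     f \<in> carrier M \<rightarrow> carrier N \<and>
     (\<forall>u\<in>carrier M. \<forall>v\<in>carrier M. f (u \<oplus>\<^bsub>M\<^esub> v) = f u \<oplus>\<^bsub>N\<^esub> f v) \<and>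
     (\<forall>r\<in>carrier R. \<forall>v\<in>carrier M. f (r \<odot>\<^bsub>M\<^esub> v) = r \<odot>\<^bsub>N\<^esub> f v)"

definition mod_iso ::
  "('a, 'b) ring_scheme \<Rightarrow> ('a, 'm, 'c) module_scheme \<Rightarrow> ('a, 'n, 'd) module_scheme \<Rightarrow> ('m \<Rightarrow> 'n) \<Rightarrow> bool" where
  "mod_iso R M N f \<longleftrightarrow> linear_map R M N f \<and> bij_betw f (carrier M) (carrier N)"

definition mod_isomorphic ::
  "('a, 'b) ring_scheme \<Rightarrow> ('a, 'm, 'c) module_scheme \<Rightarrow> ('a, 'n, 'd) module_scheme \<Rightarrow> bool" where
  "mod_isomorphic R M N \<longleftrightarrow> (\<exists>f. mod_iso R M N f)"

text \<open>Hom_A(M,N) with pointwise operations; elements are linear maps, extensional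
  outside the carrier of M.  (The ring fields mult/one are irrelevant for modules.)\<close>
definition Hom_mod ::
  "('a, 'b) ring_scheme \<Rightarrow> ('a, 'm, 'c) module_scheme \<Rightarrow> ('a, 'n, 'd) module_scheme \<Rightarrow> ('a, 'm \<Rightarrow> 'n) module" where
  "Hom_mod R M N =
     \<lparr>partial_object.carrier = {f. linear_map R M N f \<and> f \<in> extensional (carrier M)},
      monoid.mult = (\<lambda>_ _. undefined), monoid.one = undefined,
      ring.zero = (\<lambda>u\<in>carrier M. \<zero>\<^bsub>N\<^esub>),
      ring.add = (\<lambda>f g. \<lambda>u\<in>carrier M. f u \<oplus>\<^bsub>N\<^esub> g u),
      module.smult = (\<lambda>r f. \<lambda>u\<in>carrier M. r \<odot>\<^bsub>N\<^esub> f u)\<rparr>"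

definition Dual :: "('a, 'b) ring_scheme \<Rightarrow> ('a, 'm, 'c) module_scheme \<Rightarrow> ('a, 'm \<Rightarrow> 'a) module" where
  "Dual R M = Hom_mod R M (ring_mod R)"

definition bidual_map :: "('a, 'b) ring_scheme \<Rightarrow> ('a, 'm, 'c) module_scheme \<Rightarrow> 'm \<Rightarrow> (('m \<Rightarrow> 'a) \<Rightarrow> 'a)" where
  "bidual_map R M = (\<lambda>u\<in>carrier M. \<lambda>f\<in>carrier (Dual R M). f u)"

definition fin_gen :: "('a, 'b) ring_scheme \<Rightarrow> ('a, 'm, 'c) module_scheme \<Rightarrow> bool" where
  "fin_gen R M \<longleftrightarrow> (\<exists>S. finite S \<and> S \<subseteq> carrier M \<and>
     (\<forall>u\<in>carrier M. \<exists>c. c \<in> S \<rightarrow> carrier R \<and> u = finsum M (\<lambda>s. c s \<odot>\<^bsub>M\<^esub> s) S))"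

text \<open>A^n: functions nat \<Rightarrow> A supported on {..<n}.\<close>
definition vecs :: "('a, 'b) ring_scheme \<Rightarrow> nat \<Rightarrow> (nat \<Rightarrow> 'a) set" where
  "vecs R n = {v. (\<forall>i<n. v i \<in> carrier R) \<and> (\<forall>i\<ge>n. v i = \<zero>\<^bsub>R\<^esub>)}"

definition vadd :: "('a, 'b) ring_scheme \<Rightarrow> (nat \<Rightarrow> 'a) \<Rightarrow> (nat \<Rightarrow> 'a) \<Rightarrow> (nat \<Rightarrow> 'a)" where
  "vadd R v w = (\<lambda>i. v i \<oplus>\<^bsub>R\<^esub> w i)"

definition vsmult :: "('a, 'b) ring_scheme \<Rightarrow> 'a \<Rightarrow> (nat \<Rightarrow> 'a) \<Rightarrow> (nat \<Rightarrow> 'a)" where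
  "vsmult R r v = (\<lambda>i. r \<otimes>\<^bsub>R\<^esub> v i)"

definition vzero :: "('a, 'b) ring_scheme \<Rightarrow> nat \<Rightarrow> 'a" where
  "vzero R = (\<lambda>i. \<zero>\<^bsub>R\<^esub>)"

definition free_mod :: "('a, 'b) ring_scheme \<Rightarrow> nat \<Rightarrow> ('a, nat \<Rightarrow> 'a) module" where
  "free_mod R n = \<lparr>partial_object.carrier = vecs R n, monoid.mult = (\<lambda>_ _. undefined), monoid.one = undefined,
                   ring.zero = vzero R, ring.add = vadd R, module.smult = vsmult R\<rparr>"

text \<open>An m \<times> n matrix D (entries D i j, i<m, j<n) acting on column vectors A^n \<rightarrow> A^m.\<close>
definition mat_app :: "('a, 'b) ring_scheme \<Rightarrow> nat \<Rightarrow> nat \<Rightarrow> (nat \<Rightarrow> nat \<Rightarrow> 'a) \<Rightarrow> (nat \<Rightarrow> 'a) \<Rightarrow> (nat \<Rightarrow> 'a)" where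
  "mat_app R m n D v = (\<lambda>i. if i < m then finsum R (\<lambda>j. D i j \<otimes>\<^bsub>R\<^esub> v j) {..<n} else \<zero>\<^bsub>R\<^esub>)"

definition mat_carrier :: "('a, 'b) ring_scheme \<Rightarrow> nat \<Rightarrow> nat \<Rightarrow> (nat \<Rightarrow> nat \<Rightarrow> 'a) \<Rightarrow> bool" where
  "mat_carrier R m n D \<longleftrightarrow> (\<forall>i<m. \<forall>j<n. D i j \<in> carrier R)"

definition mat_transpose :: "(nat \<Rightarrow> nat \<Rightarrow> 'a) \<Rightarrow> (nat \<Rightarrow> nat \<Rightarrow> 'a)" where
  "mat_transpose D = (\<lambda>i j. D j i)"

text \<open>Cokernel of an m \<times> n matrix D: the quotient A^m / D(A^n), elements are cosets.\<close>
definition mat_image :: "('a, 'b) ring_scheme \<Rightarrow> nat \<Rightarrow> nat \<Rightarrow> (nat \<Rightarrow> nat \<Rightarrow> 'a) \<Rightarrow> (nat \<Rightarrow> 'a) set" where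
  "mat_image R m n D = mat_app R m n D ` vecs R n"

definition coker :: "('a, 'b) ring_scheme \<Rightarrow> nat \<Rightarrow> nat \<Rightarrow> (nat \<Rightarrow> nat \<Rightarrow> 'a) \<Rightarrow> ('a, (nat \<Rightarrow> 'a) set) module" where
  "coker R m n D =
     \<lparr>partial_object.carrier = {{vadd R v u | u. u \<in> mat_image R m n D} | v. v \<in> vecs R m},
      monoid.mult = (\<lambda>_ _. undefined), monoid.one = undefined,
      ring.zero = mat_image R m n D,
      ring.add = (\<lambda>P Q. {vadd R u v | u v. u \<in> P \<and> v \<in> Q}),
      module.smult = (\<lambda>r P. {vadd R (vsmult R r u) w | u w. u \<in> P \<and> w \<in> mat_image R m n D})\<rparr>"

text \<open>A resolution of M by finitely generated free modules
   ... \<rightarrow> A^(n 2) --d 2--> A^(n 1) --d 1--> A^(n 0) --eps--> M \<rightarrow> 0,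
  where d (Suc k) is an (n k) \<times> (n (Suc k)) matrix.\<close>
definition free_resolution ::
  "('a, 'b) ring_scheme \<Rightarrow> ('a, 'm, 'c) module_scheme \<Rightarrow> (nat \<Rightarrow> nat) \<Rightarrow> (nat \<Rightarrow> nat \<Rightarrow> nat \<Rightarrow> 'a) \<Rightarrow> ((nat \<Rightarrow> 'a) \<Rightarrow> 'm) \<Rightarrow> bool" where
  "free_resolution R M n d eps \<longleftrightarrow>
     (\<forall>k. mat_carrier R (n k) (n (Suc k)) (d (Suc k))) \<and>
     linear_map R (free_mod R (n 0)) M eps \<and>
     eps ` vecs R (n 0) = carrier M \<and>
     {v \<in> vecs R (n 0). eps v = \<zero>\<^bsub>M\<^esub>} = mat_image R (n 0) (n 1) (d 1) \<and>
     (\<forall>k. {v \<in> vecs R (n (Suc k)). mat_app R (n k) (n (Suc k)) (d (Suc k)) v = vzero R}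
            = mat_image R (n (Suc k)) (n (Suc (Suc k))) (d (Suc (Suc k))))"

text \<open>Ext^i_A(M,A) = 0 for all i > 0: computed as the cohomology of Hom_A(F,A) for a
  finite free resolution F of M, using Hom_A(A^n,A) = A^n, under which Hom(d,A) is the
  transpose of d.  (The cohomology is independent of the chosen resolution.)\<close>
definition ext_vanishes :: "('a, 'b) ring_scheme \<Rightarrow> ('a, 'm, 'c) module_scheme \<Rightarrow> bool" where
  "ext_vanishes R M \<longleftrightarrow>
     (\<exists>n d eps. free_resolution R M n d eps \<and>
        (\<forall>k. {w \<in> vecs R (n (Suc k)).
                mat_app R (n (Suc (Suc k))) (n (Suc k)) (mat_transpose (d (Suc (Suc k)))) w = vzero R}
             = mat_image R (n (Suc k)) (n k) (mat_transpose (d (Suc k)))))"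

definition totally_reflexive :: "('a, 'b) ring_scheme \<Rightarrow> ('a, 'm, 'c) module_scheme \<Rightarrow> bool" where
  "totally_reflexive R M \<longleftrightarrow>
     module R M \<and> fin_gen R M \<and>
     ext_vanishes R M \<and> ext_vanishes R (Dual R M) \<and>
     mod_iso R M (Dual R (Dual R M)) (bidual_map R M)"

definition gamma_mat :: "('a, 'b) ring_scheme \<Rightarrow> 'a \<Rightarrow> 'a \<Rightarrow> 'a \<Rightarrow> nat \<Rightarrow> nat \<Rightarrow> 'a" where
  "gamma_mat R x y a = (\<lambda>i j. if i = 0 \<and> j = 0 then x else if i = 0 \<and> j = 1 then a
                              else if i = 1 \<and> j = 1 then y else \<zero>\<^bsub>R\<^esub>)"

definition eta_mat :: "('a, 'b) ring_scheme \<Rightarrow> 'a \<Rightarrow> 'a \<Rightarrow> 'a \<Rightarrow> nat \<Rightarrow> nat \<Rightarrow> 'a" where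
  "eta_mat R x y a = (\<lambda>i j. if i = 0 \<and> j = 0 then y else if i = 0 \<and> j = 1 then \<ominus>\<^bsub>R\<^esub> a
                            else if i = 1 \<and> j = 1 then x else \<zero>\<^bsub>R\<^esub>)"

definition G_mod :: "('a, 'b) ring_scheme \<Rightarrow> 'a \<Rightarrow> 'a \<Rightarrow> 'a \<Rightarrow> ('a, (nat \<Rightarrow> 'a) set) module" where
  "G_mod R x y a = coker R 2 2 (gamma_mat R x y a)"

definition H_mod :: "('a, 'b) ring_scheme \<Rightarrow> 'a \<Rightarrow> 'a \<Rightarrow> 'a \<Rightarrow> ('a, (nat \<Rightarrow> 'a) set) module" where
  "H_mod R x y a = coker R 2 2 (eta_mat R x y a)"

end

theory Submission
  imports Defs
begin

text \<open>For an exact pair of zero divisors \<open>x, y\<close> the matrices \<open>\<gamma>\<^sub>a\<close> and \<open>\<eta>\<^sub>a\<close> form an exact pair: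
  \<open>ker \<gamma>\<^sub>a = im \<eta>\<^sub>a\<close>, \<open>ker \<eta>\<^sub>a = im \<gamma>\<^sub>a\<close>, and likewise for the transposes.  For any such
  pair \<open>D, E\<close> of \<open>2 \<times> 2\<close> matrices, \<open>coker D\<close> has the periodic free resolution
  \<open>\<dots> \<rightarrow> A\<^sup>2 --E--> A\<^sup>2 --D--> A\<^sup>2\<close>, whose dual complex alternates \<open>D\<^sup>T\<close> and \<open>E\<^sup>T\<close> and is
  again exact, so \<open>Ext\<^sup>i(coker D, A) = 0\<close> for \<open>i > 0\<close>.  A functional on \<open>coker D\<close> is pairing
  with a vector of \<open>ker D\<^sup>T = im E\<^sup>T \<cong> coker D\<^sup>T\<close>, so \<open>Hom(coker D, A) \<cong> coker D\<^sup>T\<close>, and the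
  bidual is presented by \<open>D\<^sup>T\<^sup>T = D\<close> through the evaluation map, which is therefore an
  isomorphism.  Finally \<open>\<eta>\<^sub>a\<^sup>T\<close> is conjugate to \<open>\<gamma>\<^sub>a\<close> by a rotation of \<open>A\<^sup>2\<close>, whence
  \<open>G\<^sub>a \<cong> coker \<eta>\<^sub>a\<^sup>T \<cong> Hom(H\<^sub>a, A)\<close>, and \<open>H\<^sub>a \<cong> Hom(G\<^sub>a, A)\<close> by the symmetry
  \<open>(x, y, a) \<mapsto> (y, x, -a)\<close>.\<close>

definition vec2 :: "('a, 'b) ring_scheme \<Rightarrow> 'a \<Rightarrow> 'a \<Rightarrow> nat \<Rightarrow> 'a" where
  "vec2 R p q = (\<lambda>i. if i = 0 then p else if i = 1 then q else \<zero>\<^bsub>R\<^esub>)"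

definition vneg :: "('a, 'b) ring_scheme \<Rightarrow> (nat \<Rightarrow> 'a) \<Rightarrow> (nat \<Rightarrow> 'a)" where
  "vneg R v = vsmult R (\<ominus>\<^bsub>R\<^esub> \<one>\<^bsub>R\<^esub>) v"

definition vdot :: "('a, 'b) ring_scheme \<Rightarrow> (nat \<Rightarrow> 'a) \<Rightarrow> (nat \<Rightarrow> 'a) \<Rightarrow> 'a" where
  "vdot R v w = v 0 \<otimes>\<^bsub>R\<^esub> w 0 \<oplus>\<^bsub>R\<^esub> v 1 \<otimes>\<^bsub>R\<^esub> w 1"

definition mat_kernel :: "('a, 'b) ring_scheme \<Rightarrow> (nat \<Rightarrow> nat \<Rightarrow> 'a) \<Rightarrow> (nat \<Rightarrow> 'a) set" where
  "mat_kernel R D = {v \<in> vecs R 2. mat_app R 2 2 D v = vzero R}"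

context cring
begin

lemma vec2_simps [simp]: "vec2 R p q 0 = p" "vec2 R p q (Suc 0) = q"
  by (simp_all add: vec2_def)

lemma vec2_in_vecs [simp]: "vec2 R p q \<in> vecs R 2 \<longleftrightarrow> p \<in> carrier R \<and> q \<in> carrier R"
  unfolding vecs_def vec2_def by (auto dest: spec[of _ 1])

lemma vec2_eq_iff [simp]: "vec2 R p q = vec2 R p' q' \<longleftrightarrow> p = p' \<and> q = q'"
  by (metis vec2_simps)

lemma vecs2_cases:
  assumes "v \<in> vecs R 2"
  obtains p q where "p \<in> carrier R" "q \<in> carrier R" "v = vec2 R p q"
proof
  show "v = vec2 R (v 0) (v 1)"
    using assms unfolding vecs_def vec2_def by (intro ext) auto
qed (use assms in \<open>auto simp: vecs_def\<close>)

lemma vecs2_eqI: "v \<in> vecs R 2 \<Longrightarrow> w \<in> vecs R 2 \<Longrightarrow> v 0 = w 0 \<Longrightarrow> v 1 = w 1 \<Longrightarrow> v = w"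
  by (elim vecs2_cases) simp

lemma vzero_eq_vec2: "vzero R = vec2 R \<zero> \<zero>"
  unfolding vzero_def vec2_def by auto

lemma vzero_apply [simp]: "vzero R i = \<zero>"
  by (simp add: vzero_def)

lemma vadd_vec2 [simp]: "vadd R (vec2 R p q) (vec2 R p' q') = vec2 R (p \<oplus> p') (q \<oplus> q')"
  unfolding vadd_def vec2_def by auto

lemma vsmult_vec2 [simp]: "r \<in> carrier R \<Longrightarrow> vsmult R r (vec2 R p q) = vec2 R (r \<otimes> p) (r \<otimes> q)"
  unfolding vsmult_def vec2_def by auto

lemma vneg_vec2 [simp]: "vneg R (vec2 R p q) = vec2 R (\<ominus> \<one> \<otimes> p) (\<ominus> \<one> \<otimes> q)"
  unfolding vneg_def by simp

lemma vzero_in_vecs [simp]: "vzero R \<in> vecs R 2"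
  by (simp add: vzero_eq_vec2)

lemma vadd_in_vecs [simp]: "v \<in> vecs R 2 \<Longrightarrow> w \<in> vecs R 2 \<Longrightarrow> vadd R v w \<in> vecs R 2"
  by (elim vecs2_cases) simp

lemma vsmult_in_vecs [simp]: "r \<in> carrier R \<Longrightarrow> v \<in> vecs R 2 \<Longrightarrow> vsmult R r v \<in> vecs R 2"
  by (elim vecs2_cases) simp

lemma vneg_in_vecs [simp]: "v \<in> vecs R 2 \<Longrightarrow> vneg R v \<in> vecs R 2"
  by (elim vecs2_cases) simp

lemma vadd_assoc:
  "u \<in> vecs R 2 \<Longrightarrow> v \<in> vecs R 2 \<Longrightarrow> w \<in> vecs R 2 \<Longrightarrow> vadd R (vadd R u v) w = vadd R u (vadd R v w)"
  by (elim vecs2_cases) (simp add: a_assoc)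

lemma vadd_commute: "v \<in> vecs R 2 \<Longrightarrow> w \<in> vecs R 2 \<Longrightarrow> vadd R v w = vadd R w v"
  by (elim vecs2_cases) (simp add: a_comm)

lemma vadd_vzero_left [simp]: "v \<in> vecs R 2 \<Longrightarrow> vadd R (vzero R) v = v"
  by (elim vecs2_cases) (simp add: vzero_eq_vec2)

lemma vadd_vzero_right [simp]: "v \<in> vecs R 2 \<Longrightarrow> vadd R v (vzero R) = v"
  by (elim vecs2_cases) (simp add: vzero_eq_vec2)

lemma vsmult_vadd_distrib:
  "r \<in> carrier R \<Longrightarrow> v \<in> vecs R 2 \<Longrightarrow> w \<in> vecs R 2 \<Longrightarrow>
    vsmult R r (vadd R v w) = vadd R (vsmult R r v) (vsmult R r w)"
  by (elim vecs2_cases) (simp add: r_distr)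

lemma vsmult_add_distrib:
  "r \<in> carrier R \<Longrightarrow> s \<in> carrier R \<Longrightarrow> v \<in> vecs R 2 \<Longrightarrow>
    vsmult R (r \<oplus> s) v = vadd R (vsmult R r v) (vsmult R s v)"
  by (elim vecs2_cases) (simp add: l_distr)

lemma vsmult_mult:
  "r \<in> carrier R \<Longrightarrow> s \<in> carrier R \<Longrightarrow> v \<in> vecs R 2 \<Longrightarrow> vsmult R (r \<otimes> s) v = vsmult R r (vsmult R s v)"
  by (elim vecs2_cases) (simp add: m_assoc)

lemma vsmult_one [simp]: "v \<in> vecs R 2 \<Longrightarrow> vsmult R \<one> v = v"
  by (elim vecs2_cases) simp

lemma vneg_vzero [simp]: "vneg R (vzero R) = vzero R"
  by (simp add: vzero_eq_vec2)

lemma vadd_vneg_left: "v \<in> vecs R 2 \<Longrightarrow> vadd R (vneg R v) v = vzero R"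
  by (elim vecs2_cases) (simp add: vzero_eq_vec2 l_minus l_neg)

lemma vadd_vneg_cancel_left: "v \<in> vecs R 2 \<Longrightarrow> u \<in> vecs R 2 \<Longrightarrow> vadd R (vadd R v u) (vneg R v) = u"
  by (elim vecs2_cases) (simp add: cring_simprules)

lemma vadd_diff_cancel: "v \<in> vecs R 2 \<Longrightarrow> w \<in> vecs R 2 \<Longrightarrow> vadd R w (vadd R v (vneg R w)) = v"
  by (elim vecs2_cases) (simp add: cring_simprules)

lemma vneg_diff: "v \<in> vecs R 2 \<Longrightarrow> w \<in> vecs R 2 \<Longrightarrow> vneg R (vadd R v (vneg R w)) = vadd R w (vneg R v)"
  by (elim vecs2_cases) (simp add: cring_simprules)

lemma mat_carrier_2x2:
  "mat_carrier R 2 2 D \<Longrightarrow> D 0 0 \<in> carrier R \<and> D 0 1 \<in> carrier R \<and> D 1 0 \<in> carrier R \<and> D 1 1 \<in> carrier R"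
  unfolding mat_carrier_def by auto

lemma mat_carrier_transpose: "mat_carrier R 2 2 D \<Longrightarrow> mat_carrier R 2 2 (mat_transpose D)"
  unfolding mat_carrier_def mat_transpose_def by auto

lemma mat_transpose_transpose [simp]: "mat_transpose (mat_transpose D) = D"
  unfolding mat_transpose_def by simp

lemma mat_app_vec2 [simp]:
  assumes "mat_carrier R 2 2 D" "p \<in> carrier R" "q \<in> carrier R"
  shows "mat_app R 2 2 D (vec2 R p q) = vec2 R (D 0 0 \<otimes> p \<oplus> D 0 1 \<otimes> q) (D 1 0 \<otimes> p \<oplus> D 1 1 \<otimes> q)"
proof -
  have "{..<2::nat} = {0, 1}" by auto
  then have "finsum R f {..<2} = f 0 \<oplus> f 1" if "f 0 \<in> carrier R" "f 1 \<in> carrier R" for f :: "nat \<Rightarrow> 'a"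
    using that by (simp add: finsum_insert)
  moreover have "D i 0 \<otimes> p \<in> carrier R" "D i 1 \<otimes> q \<in> carrier R" if "i < 2" for i
    using assms that unfolding mat_carrier_def by auto
  ultimately show ?thesis
    unfolding mat_app_def vec2_def by (intro ext) (auto simp: less_2_cases_iff)
qed

lemma mat_app_in_vecs [simp]: "mat_carrier R 2 2 D \<Longrightarrow> v \<in> vecs R 2 \<Longrightarrow> mat_app R 2 2 D v \<in> vecs R 2"
  by (elim vecs2_cases) (use mat_carrier_2x2 in simp)

lemma mat_app_vadd:
  assumes "mat_carrier R 2 2 D" "v \<in> vecs R 2" "w \<in> vecs R 2"
  shows "mat_app R 2 2 D (vadd R v w) = vadd R (mat_app R 2 2 D v) (mat_app R 2 2 D w)"
  using assms(2,3) by (elim vecs2_cases) (use assms(1) mat_carrier_2x2[OF assms(1)] in \<open>simp add: cring_simprules\<close>)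

lemma mat_app_vsmult:
  assumes "mat_carrier R 2 2 D" "r \<in> carrier R" "v \<in> vecs R 2"
  shows "mat_app R 2 2 D (vsmult R r v) = vsmult R r (mat_app R 2 2 D v)"
  using assms(3) by (elim vecs2_cases) (use assms(1,2) mat_carrier_2x2[OF assms(1)] in \<open>simp add: cring_simprules\<close>)

lemma mat_app_vzero: "mat_carrier R 2 2 D \<Longrightarrow> mat_app R 2 2 D (vzero R) = vzero R"
  using mat_carrier_2x2[of D] by (simp add: vzero_eq_vec2)

lemma mat_image_2x2_iff:
  assumes "mat_carrier R 2 2 D"
  shows "u \<in> mat_image R 2 2 D \<longleftrightarrow>
    (\<exists>s\<in>carrier R. \<exists>t\<in>carrier R. u = vec2 R (D 0 0 \<otimes> s \<oplus> D 0 1 \<otimes> t) (D 1 0 \<otimes> s \<oplus> D 1 1 \<otimes> t))"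
proof
  assume "u \<in> mat_image R 2 2 D"
  then obtain v where "v \<in> vecs R 2" "u = mat_app R 2 2 D v"
    unfolding mat_image_def by auto
  then show "\<exists>s\<in>carrier R. \<exists>t\<in>carrier R. u = vec2 R (D 0 0 \<otimes> s \<oplus> D 0 1 \<otimes> t) (D 1 0 \<otimes> s \<oplus> D 1 1 \<otimes> t)"
    using assms by (elim vecs2_cases) auto
next
  assume "\<exists>s\<in>carrier R. \<exists>t\<in>carrier R. u = vec2 R (D 0 0 \<otimes> s \<oplus> D 0 1 \<otimes> t) (D 1 0 \<otimes> s \<oplus> D 1 1 \<otimes> t)"
  then obtain s t where "s \<in> carrier R" "t \<in> carrier R"
    "u = vec2 R (D 0 0 \<otimes> s \<oplus> D 0 1 \<otimes> t) (D 1 0 \<otimes> s \<oplus> D 1 1 \<otimes> t)"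
    by blast
  then show "u \<in> mat_image R 2 2 D"
    unfolding mat_image_def using assms by (auto intro!: image_eqI[where x="vec2 R s t"])
qed

lemma mat_image_subset_vecs: "mat_carrier R 2 2 D \<Longrightarrow> u \<in> mat_image R 2 2 D \<Longrightarrow> u \<in> vecs R 2"
  unfolding mat_image_def by auto

lemma mat_app_in_mat_image: "v \<in> vecs R 2 \<Longrightarrow> mat_app R 2 2 D v \<in> mat_image R 2 2 D"
  unfolding mat_image_def by simp

lemma vzero_in_mat_image: "mat_carrier R 2 2 D \<Longrightarrow> vzero R \<in> mat_image R 2 2 D"
  by (metis mat_app_in_mat_image mat_app_vzero vzero_in_vecs)

lemma vadd_in_mat_image:
  assumes "mat_carrier R 2 2 D" "u \<in> mat_image R 2 2 D" "u' \<in> mat_image R 2 2 D"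
  shows "vadd R u u' \<in> mat_image R 2 2 D"
  using assms by (auto simp: mat_image_def mat_app_vadd[symmetric])

lemma vsmult_in_mat_image:
  assumes "mat_carrier R 2 2 D" "r \<in> carrier R" "u \<in> mat_image R 2 2 D"
  shows "vsmult R r u \<in> mat_image R 2 2 D"
  using assms by (auto simp: mat_image_def mat_app_vsmult[symmetric])

lemma vneg_in_mat_image: "mat_carrier R 2 2 D \<Longrightarrow> u \<in> mat_image R 2 2 D \<Longrightarrow> vneg R u \<in> mat_image R 2 2 D"
  unfolding vneg_def by (rule vsmult_in_mat_image) auto

lemma vdot_vec2 [simp]: "vdot R (vec2 R p q) (vec2 R p' q') = p \<otimes> p' \<oplus> q \<otimes> q'"
  unfolding vdot_def by simp

lemma vdot_closed [simp]: "v \<in> vecs R 2 \<Longrightarrow> w \<in> vecs R 2 \<Longrightarrow> vdot R v w \<in> carrier R"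
  by (elim vecs2_cases) simp

lemma vdot_commute: "v \<in> vecs R 2 \<Longrightarrow> w \<in> vecs R 2 \<Longrightarrow> vdot R v w = vdot R w v"
  by (elim vecs2_cases) (simp add: m_comm)

lemma vdot_vadd_left:
  "u \<in> vecs R 2 \<Longrightarrow> v \<in> vecs R 2 \<Longrightarrow> w \<in> vecs R 2 \<Longrightarrow> vdot R (vadd R u v) w = vdot R u w \<oplus> vdot R v w"
  by (elim vecs2_cases) (simp add: cring_simprules)

lemma vdot_vadd_right:
  "u \<in> vecs R 2 \<Longrightarrow> v \<in> vecs R 2 \<Longrightarrow> w \<in> vecs R 2 \<Longrightarrow> vdot R w (vadd R u v) = vdot R w u \<oplus> vdot R w v"
  by (elim vecs2_cases) (simp add: cring_simprules)

lemma vdot_vsmult_left: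
  "r \<in> carrier R \<Longrightarrow> v \<in> vecs R 2 \<Longrightarrow> w \<in> vecs R 2 \<Longrightarrow> vdot R (vsmult R r v) w = r \<otimes> vdot R v w"
  by (elim vecs2_cases) (simp add: cring_simprules)

lemma vdot_vsmult_right:
  "r \<in> carrier R \<Longrightarrow> v \<in> vecs R 2 \<Longrightarrow> w \<in> vecs R 2 \<Longrightarrow> vdot R w (vsmult R r v) = r \<otimes> vdot R w v"
  by (elim vecs2_cases) (simp add: cring_simprules)

lemma vdot_vzero_left [simp]: "w \<in> vecs R 2 \<Longrightarrow> vdot R (vzero R) w = \<zero>"
  by (elim vecs2_cases) (simp add: vzero_eq_vec2)

lemma vdot_vzero_right [simp]: "v \<in> vecs R 2 \<Longrightarrow> vdot R v (vzero R) = \<zero>"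
  by (elim vecs2_cases) (simp add: vzero_eq_vec2)

lemma vdot_unit_vectors: "w \<in> vecs R 2 \<Longrightarrow> vdot R (vec2 R \<one> \<zero>) w = w 0"
  "w \<in> vecs R 2 \<Longrightarrow> vdot R (vec2 R \<zero> \<one>) w = w 1"
  by (auto elim!: vecs2_cases)

lemma vzero_iff_vdot_zero:
  assumes "w \<in> vecs R 2"
  shows "w = vzero R \<longleftrightarrow> (\<forall>v\<in>vecs R 2. vdot R v w = \<zero>)"
proof
  assume "\<forall>v\<in>vecs R 2. vdot R v w = \<zero>"
  then have "vdot R (vec2 R \<one> \<zero>) w = \<zero>" "vdot R (vec2 R \<zero> \<one>) w = \<zero>"
    by simp_all
  then show "w = vzero R"
    using assms by (intro vecs2_eqI) (simp_all add: vdot_unit_vectors)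
qed simp

lemma vdot_mat_app:
  assumes "mat_carrier R 2 2 D" "s \<in> vecs R 2" "w \<in> vecs R 2"
  shows "vdot R (mat_app R 2 2 D s) w = vdot R s (mat_app R 2 2 (mat_transpose D) w)"
  using assms(2,3) mat_carrier_transpose[OF assms(1)]
  by (elim vecs2_cases) (use assms(1) mat_carrier_2x2[OF assms(1)] in \<open>simp add: mat_transpose_def cring_simprules\<close>)

end

section \<open>Cokernels\<close>

definition coker_class :: "('a, 'b) ring_scheme \<Rightarrow> (nat \<Rightarrow> nat \<Rightarrow> 'a) \<Rightarrow> (nat \<Rightarrow> 'a) \<Rightarrow> (nat \<Rightarrow> 'a) set" where
  "coker_class R D v = {vadd R v u | u. u \<in> mat_image R 2 2 D}"

definition coker_rep :: "('a, 'b) ring_scheme \<Rightarrow> (nat \<Rightarrow> nat \<Rightarrow> 'a) \<Rightarrow> (nat \<Rightarrow> 'a) set \<Rightarrow> nat \<Rightarrow> 'a" where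
  "coker_rep R D P = (SOME v. v \<in> vecs R 2 \<and> P = coker_class R D v)"

context cring
begin

lemma carrier_coker: "carrier (coker R 2 2 D) = coker_class R D ` vecs R 2"
  unfolding coker_def coker_class_def by auto

lemma coker_class_in_carrier [simp]: "v \<in> vecs R 2 \<Longrightarrow> coker_class R D v \<in> carrier (coker R 2 2 D)"
  unfolding carrier_coker by simp

lemma coker_carrier_cases:
  assumes "P \<in> carrier (coker R 2 2 D)"
  obtains v where "v \<in> vecs R 2" "P = coker_class R D v"
  using assms unfolding carrier_coker by auto

lemma coker_class_subset:
  assumes D: "mat_carrier R 2 2 D" and v: "v \<in> vecs R 2" and w: "w \<in> vecs R 2"
    and diff: "vadd R v (vneg R w) \<in> mat_image R 2 2 D"
  shows "coker_class R D v \<subseteq> coker_class R D w"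
proof
  fix z assume "z \<in> coker_class R D v"
  then obtain u where u: "u \<in> mat_image R 2 2 D" "z = vadd R v u"
    unfolding coker_class_def by auto
  have "z = vadd R (vadd R w (vadd R v (vneg R w))) u"
    using vadd_diff_cancel[OF v w] u by simp
  also have "\<dots> = vadd R w (vadd R (vadd R v (vneg R w)) u)"
    using vadd_assoc mat_image_subset_vecs[OF D] u diff w by simp
  finally show "z \<in> coker_class R D w"
    unfolding coker_class_def using vadd_in_mat_image[OF D diff u(1)] by auto
qed

lemma coker_class_eq_iff:
  assumes D: "mat_carrier R 2 2 D" and v: "v \<in> vecs R 2" and w: "w \<in> vecs R 2"
  shows "coker_class R D v = coker_class R D w \<longleftrightarrow> vadd R v (vneg R w) \<in> mat_image R 2 2 D"
proof
  assume "coker_class R D v = coker_class R D w"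
  moreover have "v \<in> coker_class R D v"
    unfolding coker_class_def using vzero_in_mat_image[OF D] v by force
  ultimately obtain u where "u \<in> mat_image R 2 2 D" "v = vadd R w u"
    unfolding coker_class_def by auto
  then show "vadd R v (vneg R w) \<in> mat_image R 2 2 D"
    using vadd_vneg_cancel_left[OF w mat_image_subset_vecs[OF D]] by simp
next
  assume diff: "vadd R v (vneg R w) \<in> mat_image R 2 2 D"
  then have "vadd R w (vneg R v) \<in> mat_image R 2 2 D"
    using vneg_in_mat_image[OF D diff] vneg_diff[OF v w] by simp
  then show "coker_class R D v = coker_class R D w"
    using coker_class_subset[OF D v w diff] coker_class_subset[OF D w v] by auto
qed

lemma coker_class_eq_zero_iff:
  "mat_carrier R 2 2 D \<Longrightarrow> v \<in> vecs R 2 \<Longrightarrow> coker_class R D v = coker_class R D (vzero R) \<longleftrightarrow> v \<in> mat_image R 2 2 D"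
  using coker_class_eq_iff[of D v "vzero R"] by simp

lemma coker_zero: "mat_carrier R 2 2 D \<Longrightarrow> \<zero>\<^bsub>coker R 2 2 D\<^esub> = coker_class R D (vzero R)"
  unfolding coker_def coker_class_def using mat_image_subset_vecs by force

lemma coker_add:
  assumes D: "mat_carrier R 2 2 D" and v: "v \<in> vecs R 2" and w: "w \<in> vecs R 2"
  shows "coker_class R D v \<oplus>\<^bsub>coker R 2 2 D\<^esub> coker_class R D w = coker_class R D (vadd R v w)"
  unfolding coker_def
proof (simp, intro equalityI subsetI)
  fix z assume "z \<in> {vadd R u u' | u u'. u \<in> coker_class R D v \<and> u' \<in> coker_class R D w}"
  then obtain i j where ij: "i \<in> mat_image R 2 2 D" "j \<in> mat_image R 2 2 D"
    and z: "z = vadd R (vadd R v i) (vadd R w j)"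
    unfolding coker_class_def by auto
  have ijv: "i \<in> vecs R 2" "j \<in> vecs R 2"
    using ij mat_image_subset_vecs[OF D] by auto
  have "z = vadd R (vadd R v w) (vadd R i j)"
    unfolding z using ijv v w by (simp add: vadd_assoc vadd_commute[of i])
  then show "z \<in> coker_class R D (vadd R v w)"
    unfolding coker_class_def using vadd_in_mat_image[OF D ij] by auto
next
  fix z assume "z \<in> coker_class R D (vadd R v w)"
  then obtain i where i: "i \<in> mat_image R 2 2 D" "z = vadd R (vadd R v w) i"
    unfolding coker_class_def by auto
  have "z = vadd R (vadd R v i) (vadd R w (vzero R))"
    using i mat_image_subset_vecs[OF D] v w by (simp add: vadd_assoc vadd_commute[of i])
  moreover have "vadd R v i \<in> coker_class R D v" "vadd R w (vzero R) \<in> coker_class R D w"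
    unfolding coker_class_def using i vzero_in_mat_image[OF D] by auto
  ultimately show "z \<in> {vadd R u u' | u u'. u \<in> coker_class R D v \<and> u' \<in> coker_class R D w}"
    by blast
qed

lemma coker_smult:
  assumes D: "mat_carrier R 2 2 D" and r: "r \<in> carrier R" and v: "v \<in> vecs R 2"
  shows "r \<odot>\<^bsub>coker R 2 2 D\<^esub> coker_class R D v = coker_class R D (vsmult R r v)"
  unfolding coker_def
proof (simp, intro equalityI subsetI)
  fix z assume "z \<in> {vadd R (vsmult R r u) w | u w. u \<in> coker_class R D v \<and> w \<in> mat_image R 2 2 D}"
  then obtain i j where ij: "i \<in> mat_image R 2 2 D" "j \<in> mat_image R 2 2 D"
    and z: "z = vadd R (vsmult R r (vadd R v i)) j"
    unfolding coker_class_def by auto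
  have "z = vadd R (vsmult R r v) (vadd R (vsmult R r i) j)"
    unfolding z using ij mat_image_subset_vecs[OF D] v r by (simp add: vsmult_vadd_distrib vadd_assoc)
  then show "z \<in> coker_class R D (vsmult R r v)"
    unfolding coker_class_def using vadd_in_mat_image[OF D vsmult_in_mat_image[OF D r ij(1)] ij(2)] by auto
next
  fix z assume "z \<in> coker_class R D (vsmult R r v)"
  then obtain i where i: "i \<in> mat_image R 2 2 D" "z = vadd R (vsmult R r v) i"
    unfolding coker_class_def by auto
  have "vadd R v (vzero R) \<in> coker_class R D v"
    unfolding coker_class_def using vzero_in_mat_image[OF D] by auto
  moreover have "z = vadd R (vsmult R r (vadd R v (vzero R))) i"
    using i v by simp
  ultimately show "z \<in> {vadd R (vsmult R r u) w | u w. u \<in> coker_class R D v \<and> w \<in> mat_image R 2 2 D}"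
    using i by blast
qed

lemma coker_rep:
  assumes "v \<in> vecs R 2"
  shows "coker_rep R D (coker_class R D v) \<in> vecs R 2"
    and "coker_class R D (coker_rep R D (coker_class R D v)) = coker_class R D v"
proof -
  have "\<exists>u. u \<in> vecs R 2 \<and> coker_class R D v = coker_class R D u"
    using assms by auto
  then have "coker_rep R D (coker_class R D v) \<in> vecs R 2 \<and>
      coker_class R D v = coker_class R D (coker_rep R D (coker_class R D v))"
    unfolding coker_rep_def by (rule someI_ex)
  then show "coker_rep R D (coker_class R D v) \<in> vecs R 2"
    and "coker_class R D (coker_rep R D (coker_class R D v)) = coker_class R D v"
    by simp_all
qed

lemma coker_module:
  assumes D: "mat_carrier R 2 2 D"
  shows "module R (coker R 2 2 D)"
proof -
  let ?M = "coker R 2 2 D"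
  note E = coker_carrier_cases and simps = coker_add[OF D] coker_smult[OF D] coker_zero[OF D]
  have "abelian_group ?M"
  proof (rule abelian_groupI)
    fix P Q S assume "P \<in> carrier ?M" "Q \<in> carrier ?M" "S \<in> carrier ?M"
    then show "P \<oplus>\<^bsub>?M\<^esub> Q \<oplus>\<^bsub>?M\<^esub> S = P \<oplus>\<^bsub>?M\<^esub> (Q \<oplus>\<^bsub>?M\<^esub> S)"
      by (elim E) (simp add: simps vadd_assoc)
  next
    fix P assume "P \<in> carrier ?M"
    then show "\<exists>Q\<in>carrier ?M. Q \<oplus>\<^bsub>?M\<^esub> P = \<zero>\<^bsub>?M\<^esub>"
      by (elim E) (metis simps(1,3) coker_class_in_carrier vadd_vneg_left vneg_in_vecs)
  qed (auto elim!: E simp: simps vadd_commute)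
  then show ?thesis
    by (intro moduleI is_cring)
      (auto elim!: E simp: simps vsmult_add_distrib vsmult_vadd_distrib vsmult_mult)
qed

lemma coker_fin_gen:
  assumes D: "mat_carrier R 2 2 D"
  shows "fin_gen R (coker R 2 2 D)"
proof -
  let ?M = "coker R 2 2 D"
  interpret M: module R ?M by (rule coker_module[OF D])
  define e0 where "e0 = coker_class R D (vec2 R \<one> \<zero>)"
  define e1 where "e1 = coker_class R D (vec2 R \<zero> \<one>)"
  have e: "e0 \<in> carrier ?M" "e1 \<in> carrier ?M"
    unfolding e0_def e1_def by simp_all
  have span: "coker_class R D (vec2 R p q) = p \<odot>\<^bsub>?M\<^esub> e0 \<oplus>\<^bsub>?M\<^esub> q \<odot>\<^bsub>?M\<^esub> e1"
    if "p \<in> carrier R" "q \<in> carrier R" for p q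
    unfolding e0_def e1_def using that by (simp add: coker_smult[OF D] coker_add[OF D])
  show ?thesis unfolding fin_gen_def
  proof (intro exI[where x="{e0, e1}"] conjI ballI)
    fix u assume "u \<in> carrier ?M"
    then obtain p q where pq: "p \<in> carrier R" "q \<in> carrier R" "u = coker_class R D (vec2 R p q)"
      by (metis coker_carrier_cases vecs2_cases)
    show "\<exists>c. c \<in> {e0, e1} \<rightarrow> carrier R \<and> u = finsum ?M (\<lambda>s. c s \<odot>\<^bsub>?M\<^esub> s) {e0, e1}"
    proof (cases "e0 = e1")
      case True
      then have "u = (p \<oplus> q) \<odot>\<^bsub>?M\<^esub> e0"
        using span pq e by (simp add: M.smult_l_distr)
      then show ?thesis
        using True pq e by (intro exI[where x="\<lambda>_. p \<oplus> q"]) simp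
    next
      case False
      then show ?thesis
        using span pq e by (intro exI[where x="\<lambda>s. if s = e0 then p else q"]) (simp add: M.finsum_insert)
    qed
  qed (use e in auto)
qed

end

section \<open>Presentations and exact pairs of matrices\<close>

definition presentation ::
  "('a, 'b) ring_scheme \<Rightarrow> (nat \<Rightarrow> nat \<Rightarrow> 'a) \<Rightarrow> ('a, 'm, 'c) module_scheme \<Rightarrow> ((nat \<Rightarrow> 'a) \<Rightarrow> 'm) \<Rightarrow> bool" where
  "presentation R D N eps \<longleftrightarrow>
     mat_carrier R 2 2 D \<and> linear_map R (free_mod R 2) N eps \<and> eps ` vecs R 2 = carrier N \<and>
     {v \<in> vecs R 2. eps v = \<zero>\<^bsub>N\<^esub>} = mat_image R 2 2 D"

context cring
begin

lemma free_mod_simps [simp]: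
  "carrier (free_mod R n) = vecs R n" "ring.add (free_mod R n) = vadd R"
  "module.smult (free_mod R n) = vsmult R" "ring.zero (free_mod R n) = vzero R"
  unfolding free_mod_def by simp_all

lemma presentation_coker:
  assumes D: "mat_carrier R 2 2 D"
  shows "presentation R D (coker R 2 2 D) (coker_class R D)"
proof -
  have "{v \<in> vecs R 2. coker_class R D v = \<zero>\<^bsub>coker R 2 2 D\<^esub>} = mat_image R 2 2 D"
    using coker_class_eq_zero_iff[OF D] mat_image_subset_vecs[OF D] by (auto simp: coker_zero[OF D])
  then show ?thesis
    unfolding presentation_def linear_map_def
    by (auto simp: D coker_add coker_smult carrier_coker)
qed

lemma presentation_linear:
  assumes "presentation R D N eps"
  shows "\<And>v. v \<in> vecs R 2 \<Longrightarrow> eps v \<in> carrier N"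
    and "\<And>v w. v \<in> vecs R 2 \<Longrightarrow> w \<in> vecs R 2 \<Longrightarrow> eps (vadd R v w) = eps v \<oplus>\<^bsub>N\<^esub> eps w"
    and "\<And>r v. r \<in> carrier R \<Longrightarrow> v \<in> vecs R 2 \<Longrightarrow> eps (vsmult R r v) = r \<odot>\<^bsub>N\<^esub> eps v"
  using assms unfolding presentation_def linear_map_def by auto

lemma presentation_eq_iff:
  assumes N: "module R N" and eps: "presentation R D N eps" and v: "v \<in> vecs R 2" and w: "w \<in> vecs R 2"
  shows "eps v = eps w \<longleftrightarrow> vadd R v (vneg R w) \<in> mat_image R 2 2 D"
proof -
  interpret N: module R N by (rule N)
  let ?d = "vadd R v (vneg R w)"
  have "vadd R ?d w = v"
    using v w by (simp add: vadd_assoc vadd_vneg_left)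
  then have "eps ?d \<oplus>\<^bsub>N\<^esub> eps w = eps v"
    using presentation_linear(2)[OF eps] v w by (metis vadd_in_vecs vneg_in_vecs)
  then have "eps v = eps w \<longleftrightarrow> eps ?d = \<zero>\<^bsub>N\<^esub>"
    using presentation_linear(1)[OF eps] v w by (metis N.add.r_cancel_one vadd_in_vecs vneg_in_vecs)
  also have "\<dots> \<longleftrightarrow> ?d \<in> mat_image R 2 2 D"
    using eps v w unfolding presentation_def by auto
  finally show ?thesis .
qed

lemma coker_mod_iso_of_presentation:
  assumes N: "module R N" and eps: "presentation R D N eps"
    and f: "\<And>v. v \<in> vecs R 2 \<Longrightarrow> f (coker_class R D v) = eps v"
  shows "mod_iso R (coker R 2 2 D) N f"
proof -
  have D: "mat_carrier R 2 2 D"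
    using eps unfolding presentation_def by simp
  note lin = presentation_linear[OF eps] and E = coker_carrier_cases
  have "inj_on f (carrier (coker R 2 2 D))"
  proof (rule inj_onI)
    fix P Q assume "P \<in> carrier (coker R 2 2 D)" "Q \<in> carrier (coker R 2 2 D)" "f P = f Q"
    then show "P = Q"
      by (elim E) (simp add: f presentation_eq_iff[OF N eps] coker_class_eq_iff[OF D])
  qed
  moreover have "f ` carrier (coker R 2 2 D) = carrier N"
    using eps unfolding presentation_def carrier_coker image_image by (simp add: f cong: image_cong)
  ultimately show ?thesis
    unfolding mod_iso_def linear_map_def bij_betw_def
    by (auto elim!: E simp: f lin coker_add[OF D] coker_smult[OF D])
qed

lemma coker_isomorphic_of_presentation:
  assumes N: "module R N" and eps: "presentation R D N eps"
  shows "mod_isomorphic R (coker R 2 2 D) N"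
proof -
  have D: "mat_carrier R 2 2 D"
    using eps unfolding presentation_def by simp
  have "eps (coker_rep R D (coker_class R D v)) = eps v" if "v \<in> vecs R 2" for v
    using coker_rep[where D=D, OF that] that by (simp add: presentation_eq_iff[OF N eps] coker_class_eq_iff[OF D])
  then show ?thesis
    unfolding mod_isomorphic_def
    by (blast intro: coker_mod_iso_of_presentation[OF N eps, of "\<lambda>P. eps (coker_rep R D P)"])
qed

end

locale exact_matrix_pair = cring +
  fixes D E :: "nat \<Rightarrow> nat \<Rightarrow> 'a"
  assumes carrier_D: "mat_carrier R 2 2 D" and carrier_E: "mat_carrier R 2 2 E"
    and kernel_D: "mat_kernel R D = mat_image R 2 2 E"
    and kernel_E: "mat_kernel R E = mat_image R 2 2 D"
    and kernel_transpose_D: "mat_kernel R (mat_transpose D) = mat_image R 2 2 (mat_transpose E)"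
    and kernel_transpose_E: "mat_kernel R (mat_transpose E) = mat_image R 2 2 (mat_transpose D)"

lemma exact_matrix_pair_swap: "exact_matrix_pair R D E \<Longrightarrow> exact_matrix_pair R E D"
  unfolding exact_matrix_pair_def exact_matrix_pair_axioms_def by auto

lemma exact_matrix_pair_transpose:
  "exact_matrix_pair R D E \<Longrightarrow> exact_matrix_pair R (mat_transpose D) (mat_transpose E)"
  unfolding exact_matrix_pair_def exact_matrix_pair_axioms_def by (auto intro: cring.mat_carrier_transpose)

context exact_matrix_pair
begin

lemma ext_vanishes_of_presentation:
  assumes "presentation R D N eps"
  shows "ext_vanishes R N"
proof -
  define d where "d k = (if odd k then D else E)" for k :: nat
  have d_Suc: "d (Suc k) = (if even k then D else E)" "d (Suc (Suc k)) = (if even k then E else D)" for k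
    unfolding d_def by auto
  have "d 1 = D"
    unfolding d_def by simp
  then have "free_resolution R N (\<lambda>_. 2) d eps"
    using assms carrier_D carrier_E kernel_D kernel_E
    unfolding free_resolution_def presentation_def mat_kernel_def d_Suc by auto
  moreover have "{w \<in> vecs R 2. mat_app R 2 2 (mat_transpose (d (Suc (Suc k)))) w = vzero R} =
      mat_image R 2 2 (mat_transpose (d (Suc k)))" for k
    using kernel_transpose_D kernel_transpose_E unfolding mat_kernel_def d_Suc by auto
  ultimately show ?thesis
    unfolding ext_vanishes_def by blast
qed

end

section \<open>Duals of cokernels\<close>

definition coker_functional ::
  "('a, 'b) ring_scheme \<Rightarrow> (nat \<Rightarrow> nat \<Rightarrow> 'a) \<Rightarrow> (nat \<Rightarrow> 'a) \<Rightarrow> (nat \<Rightarrow> 'a) set \<Rightarrow> 'a" where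
  "coker_functional R D z = (\<lambda>P\<in>carrier (coker R 2 2 D). vdot R (coker_rep R D P) z)"

context cring
begin

lemma carrier_Dual: "carrier (Dual R M) = {f. linear_map R M (ring_mod R) f \<and> f \<in> extensional (carrier M)}"
  unfolding Dual_def Hom_mod_def by simp

lemma Dual_add: "f \<oplus>\<^bsub>Dual R M\<^esub> g = (\<lambda>u\<in>carrier M. f u \<oplus> g u)"
  unfolding Dual_def Hom_mod_def ring_mod_def by simp

lemma Dual_smult: "r \<odot>\<^bsub>Dual R M\<^esub> f = (\<lambda>u\<in>carrier M. r \<otimes> f u)"
  unfolding Dual_def Hom_mod_def ring_mod_def by simp

lemma Dual_zero: "\<zero>\<^bsub>Dual R M\<^esub> = (\<lambda>u\<in>carrier M. \<zero>)"
  unfolding Dual_def Hom_mod_def ring_mod_def by simp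

lemma Dual_add_apply: "u \<in> carrier M \<Longrightarrow> (f \<oplus>\<^bsub>Dual R M\<^esub> g) u = f u \<oplus> g u"
  by (simp add: Dual_add)

lemma Dual_smult_apply: "u \<in> carrier M \<Longrightarrow> (r \<odot>\<^bsub>Dual R M\<^esub> f) u = r \<otimes> f u"
  by (simp add: Dual_smult)

lemma Dual_zero_apply: "u \<in> carrier M \<Longrightarrow> \<zero>\<^bsub>Dual R M\<^esub> u = \<zero>"
  by (simp add: Dual_zero)

lemma linear_map_ring_mod_iff:
  "linear_map R M (ring_mod R) f \<longleftrightarrow>
     f \<in> carrier M \<rightarrow> carrier R \<and> (\<forall>u\<in>carrier M. \<forall>v\<in>carrier M. f (u \<oplus>\<^bsub>M\<^esub> v) = f u \<oplus> f v) \<and>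
     (\<forall>r\<in>carrier R. \<forall>v\<in>carrier M. f (r \<odot>\<^bsub>M\<^esub> v) = r \<otimes> f v)"
  unfolding linear_map_def ring_mod_def by simp

lemma in_carrier_DualD:
  assumes "f \<in> carrier (Dual R M)"
  shows "\<And>u. u \<in> carrier M \<Longrightarrow> f u \<in> carrier R"
    and "\<And>u v. u \<in> carrier M \<Longrightarrow> v \<in> carrier M \<Longrightarrow> f (u \<oplus>\<^bsub>M\<^esub> v) = f u \<oplus> f v"
    and "\<And>r v. r \<in> carrier R \<Longrightarrow> v \<in> carrier M \<Longrightarrow> f (r \<odot>\<^bsub>M\<^esub> v) = r \<otimes> f v"
    and "\<And>u. u \<notin> carrier M \<Longrightarrow> f u = undefined"
  using assms unfolding carrier_Dual linear_map_ring_mod_iff extensional_def by auto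

lemma in_carrier_DualI:
  assumes "\<And>u. u \<in> carrier M \<Longrightarrow> f u \<in> carrier R"
    and "\<And>u v. u \<in> carrier M \<Longrightarrow> v \<in> carrier M \<Longrightarrow> f (u \<oplus>\<^bsub>M\<^esub> v) = f u \<oplus> f v"
    and "\<And>r v. r \<in> carrier R \<Longrightarrow> v \<in> carrier M \<Longrightarrow> f (r \<odot>\<^bsub>M\<^esub> v) = r \<otimes> f v"
    and "\<And>u. u \<notin> carrier M \<Longrightarrow> f u = undefined"
  shows "f \<in> carrier (Dual R M)"
  using assms unfolding carrier_Dual linear_map_ring_mod_iff extensional_def by auto

lemma Dual_eqI:
  assumes "f \<in> carrier (Dual R M)" "g \<in> carrier (Dual R M)" "\<And>u. u \<in> carrier M \<Longrightarrow> f u = g u"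
  shows "f = g"
  using assms in_carrier_DualD(4) by (metis ext)

lemma module_Dual:
  assumes "module R M"
  shows "module R (Dual R M)"
proof -
  interpret M: module R M by (rule assms)
  note D = in_carrier_DualD[where M=M]
  have add_closed: "f \<oplus>\<^bsub>Dual R M\<^esub> g \<in> carrier (Dual R M)"
    if "f \<in> carrier (Dual R M)" "g \<in> carrier (Dual R M)" for f g
    unfolding Dual_add using that
    by (intro in_carrier_DualI) (auto simp: D a_ac r_distr)
  have smult_closed: "r \<odot>\<^bsub>Dual R M\<^esub> f \<in> carrier (Dual R M)"
    if "r \<in> carrier R" "f \<in> carrier (Dual R M)" for r f
    unfolding Dual_smult using that
    by (intro in_carrier_DualI) (auto simp: D r_distr m_lcomm)
  have zero_closed: "\<zero>\<^bsub>Dual R M\<^esub> \<in> carrier (Dual R M)"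
    unfolding Dual_zero by (intro in_carrier_DualI) auto
  note closed = add_closed smult_closed zero_closed
  have "abelian_group (Dual R M)"
  proof (rule abelian_groupI)
    fix f assume f: "f \<in> carrier (Dual R M)"
    then show "\<exists>g\<in>carrier (Dual R M). g \<oplus>\<^bsub>Dual R M\<^esub> f = \<zero>\<^bsub>Dual R M\<^esub>"
      by (intro bexI[where x="\<ominus> \<one> \<odot>\<^bsub>Dual R M\<^esub> f"] Dual_eqI[where M=M] closed)
        (auto simp: Dual_add_apply Dual_smult_apply Dual_zero_apply D l_minus l_neg)
  qed (auto intro!: Dual_eqI[where M=M] closed simp: Dual_add_apply Dual_zero_apply D a_ac)
  then show ?thesis
    by (intro moduleI is_cring smult_closed)
      (auto intro!: Dual_eqI[where M=M] closed
        simp: Dual_add_apply Dual_smult_apply D l_distr r_distr m_assoc)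
qed

lemma Dual_eq_zero_iff:
  assumes "module R M" "f \<in> carrier (Dual R M)"
  shows "f = \<zero>\<^bsub>Dual R M\<^esub> \<longleftrightarrow> (\<forall>u\<in>carrier M. f u = \<zero>)"
proof -
  interpret N: module R "Dual R M" by (rule module_Dual[OF assms(1)])
  show ?thesis
    using assms(2) N.zero_closed by (auto simp: Dual_zero_apply intro: Dual_eqI[where M=M])
qed

lemma Dual_vector_of_presentation:
  assumes eps: "presentation R D N eps" and F: "F \<in> carrier (Dual R N)"
  obtains z where "z \<in> mat_kernel R (mat_transpose D)" "\<And>w. w \<in> vecs R 2 \<Longrightarrow> F (eps w) = vdot R w z"
proof
  have D: "mat_carrier R 2 2 D"
    using eps unfolding presentation_def by simp
  note lin = presentation_linear[OF eps] and FD = in_carrier_DualD[OF F]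
  define e0 where "e0 = vec2 R \<one> \<zero>"
  define e1 where "e1 = vec2 R \<zero> \<one>"
  have e: "e0 \<in> vecs R 2" "e1 \<in> vecs R 2"
    unfolding e0_def e1_def by simp_all
  define z where "z = vec2 R (F (eps e0)) (F (eps e1))"
  have z: "z \<in> vecs R 2"
    unfolding z_def using e by (simp add: FD lin)
  show Fz: "F (eps w) = vdot R w z" if w: "w \<in> vecs R 2" for w
  proof -
    obtain p q where pq: "p \<in> carrier R" "q \<in> carrier R" "w = vec2 R p q"
      using w by (rule vecs2_cases)
    then have "w = vadd R (vsmult R p e0) (vsmult R q e1)"
      unfolding e0_def e1_def by simp
    then have "F (eps w) = F (eps (vsmult R p e0)) \<oplus> F (eps (vsmult R q e1))"
      using pq e by (simp add: lin(1,2) FD(2) del: vsmult_vec2)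
    also have "\<dots> = p \<otimes> F (eps e0) \<oplus> q \<otimes> F (eps e1)"
      using pq e by (simp add: lin(1,3) FD(3))
    finally have "F (eps w) = p \<otimes> F (eps e0) \<oplus> q \<otimes> F (eps e1)" .
    then show ?thesis
      unfolding z_def pq(3) by simp
  qed
  have "vdot R s (mat_app R 2 2 (mat_transpose D) z) = \<zero>" if s: "s \<in> vecs R 2" for s
  proof -
    have "eps (mat_app R 2 2 D s) = eps (vzero R)"
      using eps s vzero_in_mat_image[OF D] mat_app_in_mat_image[OF s]
      unfolding presentation_def by (metis (mono_tags, lifting) mem_Collect_eq)
    then show ?thesis
      using Fz[of "mat_app R 2 2 D s"] Fz[of "vzero R"] vdot_mat_app[OF D s z] D s z by simp
  qed
  then have "mat_app R 2 2 (mat_transpose D) z = vzero R"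
    using mat_carrier_transpose[OF D] z by (simp add: vzero_iff_vdot_zero)
  then show "z \<in> mat_kernel R (mat_transpose D)"
    unfolding mat_kernel_def using z by simp
qed

lemma coker_functional_class:
  assumes D: "mat_carrier R 2 2 D" and z: "z \<in> mat_kernel R (mat_transpose D)" and v: "v \<in> vecs R 2"
  shows "coker_functional R D z (coker_class R D v) = vdot R v z"
proof -
  define r where "r = coker_rep R D (coker_class R D v)"
  have r: "r \<in> vecs R 2" "vadd R r (vneg R v) \<in> mat_image R 2 2 D"
    using coker_rep[where D=D, OF v] coker_class_eq_iff[OF D _ v] unfolding r_def by auto
  then obtain s where s: "s \<in> vecs R 2" "vadd R r (vneg R v) = mat_app R 2 2 D s"
    unfolding mat_image_def by auto
  have zD: "z \<in> vecs R 2" "mat_app R 2 2 (mat_transpose D) z = vzero R"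
    using z unfolding mat_kernel_def by auto
  have "vdot R r z = vdot R (vadd R v (mat_app R 2 2 D s)) z"
    using vadd_diff_cancel[OF r(1) v] s(2) by simp
  also have "\<dots> = vdot R v z"
    using D s v zD by (simp add: vdot_vadd_left vdot_mat_app)
  finally show ?thesis
    unfolding coker_functional_def r_def using v by simp
qed

lemma coker_functional_in_Dual:
  assumes D: "mat_carrier R 2 2 D" and z: "z \<in> mat_kernel R (mat_transpose D)"
  shows "coker_functional R D z \<in> carrier (Dual R (coker R 2 2 D))"
proof -
  have "z \<in> vecs R 2"
    using z unfolding mat_kernel_def by simp
  then show ?thesis
  proof (intro in_carrier_DualI)
    show "coker_functional R D z P = undefined" if "P \<notin> carrier (coker R 2 2 D)" for P
      using that unfolding coker_functional_def by simp
  qed (auto elim!: coker_carrier_cases simp: coker_functional_class[OF D z] coker_add[OF D]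
        coker_smult[OF D] vdot_vadd_left vdot_vsmult_left)
qed

lemma Dual_coker_eq_coker_functional:
  assumes D: "mat_carrier R 2 2 D" and f: "f \<in> carrier (Dual R (coker R 2 2 D))"
  obtains z where "z \<in> mat_kernel R (mat_transpose D)" "f = coker_functional R D z"
proof -
  obtain z where z: "z \<in> mat_kernel R (mat_transpose D)"
    and fz: "\<And>w. w \<in> vecs R 2 \<Longrightarrow> f (coker_class R D w) = vdot R w z"
    using Dual_vector_of_presentation[OF presentation_coker[OF D] f] by blast
  have "f = coker_functional R D z"
    using f coker_functional_in_Dual[OF D z]
    by (rule Dual_eqI) (auto elim!: coker_carrier_cases simp: fz coker_functional_class[OF D z])
  with z that show ?thesis by blast
qed

end

definition dual_cover ::
  "('a, 'b) ring_scheme \<Rightarrow> (nat \<Rightarrow> nat \<Rightarrow> 'a) \<Rightarrow> (nat \<Rightarrow> nat \<Rightarrow> 'a) \<Rightarrow> (nat \<Rightarrow> 'a) \<Rightarrow> (nat \<Rightarrow> 'a) set \<Rightarrow> 'a" where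
  "dual_cover R D E w = coker_functional R D (mat_app R 2 2 (mat_transpose E) w)"

context exact_matrix_pair
begin

lemma module_coker_D: "module R (coker R 2 2 D)"
  by (rule coker_module[OF carrier_D])

lemma mat_app_transpose_E_in_kernel:
  "w \<in> vecs R 2 \<Longrightarrow> mat_app R 2 2 (mat_transpose E) w \<in> mat_kernel R (mat_transpose D)"
  unfolding kernel_transpose_D by (rule mat_app_in_mat_image)

lemma dual_cover_in_Dual: "w \<in> vecs R 2 \<Longrightarrow> dual_cover R D E w \<in> carrier (Dual R (coker R 2 2 D))"
  unfolding dual_cover_def by (rule coker_functional_in_Dual[OF carrier_D mat_app_transpose_E_in_kernel])

lemma dual_cover_class:
  "w \<in> vecs R 2 \<Longrightarrow> v \<in> vecs R 2 \<Longrightarrow> dual_cover R D E w (coker_class R D v) = vdot R (mat_app R 2 2 E v) w"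
  unfolding dual_cover_def
  using coker_functional_class[OF carrier_D mat_app_transpose_E_in_kernel] vdot_mat_app[OF carrier_E]
  by simp

lemma presentation_Dual_coker: "presentation R (mat_transpose D) (Dual R (coker R 2 2 D)) (dual_cover R D E)"
proof -
  let ?M = "coker R 2 2 D" let ?N = "Dual R ?M"
  interpret N: module R ?N by (rule module_Dual[OF module_coker_D])
  note eqI = Dual_eqI[where M="?M"] and E = carrier_E
  have "linear_map R (free_mod R 2) ?N (dual_cover R D E)"
    unfolding linear_map_def
    by (auto intro!: eqI dual_cover_in_Dual elim!: coker_carrier_cases
        simp: Dual_add_apply Dual_smult_apply dual_cover_class mat_app_vadd[OF E] mat_app_vsmult[OF E]
        vdot_vadd_right vdot_vsmult_right E)
  moreover have "dual_cover R D E ` vecs R 2 = carrier ?N"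
  proof
    show "carrier ?N \<subseteq> dual_cover R D E ` vecs R 2"
    proof
      fix f assume "f \<in> carrier ?N"
      then obtain z where "z \<in> mat_kernel R (mat_transpose D)" "f = coker_functional R D z"
        using Dual_coker_eq_coker_functional[OF carrier_D] by blast
      then show "f \<in> dual_cover R D E ` vecs R 2"
        unfolding kernel_transpose_D mat_image_def dual_cover_def by auto
    qed
  qed (use dual_cover_in_Dual in auto)
  moreover have "dual_cover R D E w = \<zero>\<^bsub>?N\<^esub> \<longleftrightarrow> w \<in> mat_image R 2 2 (mat_transpose D)"
    if w: "w \<in> vecs R 2" for w
  proof -
    have "dual_cover R D E w = \<zero>\<^bsub>?N\<^esub> \<longleftrightarrow> (\<forall>v\<in>vecs R 2. dual_cover R D E w (coker_class R D v) = \<zero>)"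
      unfolding Dual_eq_zero_iff[OF module_coker_D dual_cover_in_Dual[OF w]] carrier_coker by simp
    also have "\<dots> \<longleftrightarrow> (\<forall>v\<in>vecs R 2. vdot R v (mat_app R 2 2 (mat_transpose E) w) = \<zero>)"
      using w by (simp add: dual_cover_class vdot_mat_app[OF E])
    also have "\<dots> \<longleftrightarrow> w \<in> mat_kernel R (mat_transpose E)"
      using w mat_carrier_transpose[OF E] unfolding mat_kernel_def by (simp add: vzero_iff_vdot_zero)
    finally show ?thesis
      unfolding kernel_transpose_E .
  qed
  ultimately show ?thesis
    unfolding presentation_def using mat_carrier_transpose[OF carrier_D] mat_image_subset_vecs by blast
qed

lemma presentation_bidual_coker:
  "presentation R D (Dual R (Dual R (coker R 2 2 D))) (\<lambda>v. \<lambda>f\<in>carrier (Dual R (coker R 2 2 D)). f (coker_class R D v))"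
  (is "presentation R D ?NN ?ev")
proof -
  let ?M = "coker R 2 2 D" let ?N = "Dual R ?M"
  interpret N: module R ?N by (rule module_Dual[OF module_coker_D])
  interpret NN: module R ?NN by (rule module_Dual[OF N.module_axioms])
  note eqI = Dual_eqI[where M="?N"] and cover = presentation_Dual_coker
  have cover_image: "dual_cover R D E ` vecs R 2 = carrier ?N"
    using cover unfolding presentation_def by simp
  have ev_in: "?ev v \<in> carrier ?NN" if "v \<in> vecs R 2" for v
    using that by (intro in_carrier_DualI) (auto simp: Dual_add_apply Dual_smult_apply in_carrier_DualD)
  have "f (coker_class R D (vadd R v w)) = f (coker_class R D v) \<oplus> f (coker_class R D w)"
    if "f \<in> carrier ?N" "v \<in> vecs R 2" "w \<in> vecs R 2" for f v w
    using that by (simp add: coker_add[OF carrier_D, symmetric] in_carrier_DualD)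
  moreover have "f (coker_class R D (vsmult R r v)) = r \<otimes> f (coker_class R D v)"
    if "f \<in> carrier ?N" "r \<in> carrier R" "v \<in> vecs R 2" for f r v
    using that by (simp add: coker_smult[OF carrier_D, symmetric] in_carrier_DualD)
  ultimately have "linear_map R (free_mod R 2) ?NN ?ev"
    unfolding linear_map_def by (auto intro!: eqI ev_in simp: Dual_add_apply Dual_smult_apply)
  moreover have "carrier ?NN \<subseteq> ?ev ` vecs R 2"
  proof
    fix F assume F: "F \<in> carrier ?NN"
    obtain z where z: "z \<in> mat_kernel R D" and Fz: "\<And>w. w \<in> vecs R 2 \<Longrightarrow> F (dual_cover R D E w) = vdot R w z"
      using Dual_vector_of_presentation[OF cover F] by auto
    then obtain u where u: "u \<in> vecs R 2" "z = mat_app R 2 2 E u"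
      unfolding kernel_D mat_image_def by auto
    have "F = ?ev u"
      using F ev_in[OF u(1)]
    proof (rule eqI)
      fix f assume "f \<in> carrier ?N"
      then obtain w where "w \<in> vecs R 2" "f = dual_cover R D E w"
        unfolding cover_image[symmetric] by blast
      then show "F f = ?ev u f"
        using u Fz carrier_E by (simp add: dual_cover_in_Dual dual_cover_class vdot_commute)
    qed
    then show "F \<in> ?ev ` vecs R 2"
      using u by blast
  qed
  moreover have "?ev v = \<zero>\<^bsub>?NN\<^esub> \<longleftrightarrow> v \<in> mat_image R 2 2 D" if v: "v \<in> vecs R 2" for v
  proof -
    have "?ev v = \<zero>\<^bsub>?NN\<^esub> \<longleftrightarrow> (\<forall>f\<in>carrier ?N. f (coker_class R D v) = \<zero>)"
      unfolding Dual_eq_zero_iff[OF N.module_axioms ev_in[OF v]] by simp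
    also have "\<dots> \<longleftrightarrow> (\<forall>w\<in>vecs R 2. dual_cover R D E w (coker_class R D v) = \<zero>)"
      unfolding cover_image[symmetric] by simp
    also have "\<dots> \<longleftrightarrow> (\<forall>w\<in>vecs R 2. vdot R w (mat_app R 2 2 E v) = \<zero>)"
      using v carrier_E by (simp add: dual_cover_class vdot_commute)
    also have "\<dots> \<longleftrightarrow> v \<in> mat_kernel R E"
      using v carrier_E unfolding mat_kernel_def by (simp add: vzero_iff_vdot_zero)
    finally show ?thesis
      unfolding kernel_E .
  qed
  ultimately show ?thesis
    unfolding presentation_def using carrier_D ev_in mat_image_subset_vecs[OF carrier_D] by blast
qed

lemma coker_totally_reflexive: "totally_reflexive R (coker R 2 2 D)"
proof -
  interpret T: exact_matrix_pair R "mat_transpose D" "mat_transpose E"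
    by (rule exact_matrix_pair_transpose) unfold_locales
  have "mod_iso R (coker R 2 2 D) (Dual R (Dual R (coker R 2 2 D))) (bidual_map R (coker R 2 2 D))"
    by (rule coker_mod_iso_of_presentation[OF module_Dual[OF module_Dual] presentation_bidual_coker])
      (simp_all add: module_coker_D bidual_map_def)
  then show ?thesis
    unfolding totally_reflexive_def
    using module_coker_D coker_fin_gen[OF carrier_D]
      ext_vanishes_of_presentation[OF presentation_coker[OF carrier_D]]
      T.ext_vanishes_of_presentation[OF presentation_Dual_coker]
    by blast
qed

end

section \<open>The matrices \<open>\<gamma>\<^sub>a\<close> and \<open>\<eta>\<^sub>a\<close>\<close>

context cring
begin

lemma exact_zd_pair_sym: "exact_zd_pair R x y \<Longrightarrow> exact_zd_pair R y x"
  unfolding exact_zd_pair_def by auto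

lemma exact_zd_pair_carrier: "exact_zd_pair R x y \<Longrightarrow> x \<in> carrier R \<and> y \<in> carrier R"
  unfolding exact_zd_pair_def by auto

lemma exact_zd_pair_mult_eq_zero_iff:
  assumes "exact_zd_pair R x y" "z \<in> carrier R"
  shows "x \<otimes> z = \<zero> \<longleftrightarrow> (\<exists>s\<in>carrier R. z = s \<otimes> y)"
proof -
  have "z \<in> ann R x \<longleftrightarrow> z \<in> PIdl y"
    using assms(1) unfolding exact_zd_pair_def by simp
  then show ?thesis
    using assms(2) unfolding ann_def cgenideal_def by auto
qed

lemma exact_zd_pair_mult_zero: "exact_zd_pair R x y \<Longrightarrow> x \<otimes> y = \<zero>"
proof -
  assume xy: "exact_zd_pair R x y"
  then have "y \<in> carrier R" "y = \<one> \<otimes> y"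
    using exact_zd_pair_carrier by auto
  then show "x \<otimes> y = \<zero>"
    using exact_zd_pair_mult_eq_zero_iff[OF xy] by blast
qed

lemma gamma_mat_entries [simp]:
  "gamma_mat R x y a 0 0 = x" "gamma_mat R x y a 0 (Suc 0) = a"
  "gamma_mat R x y a (Suc 0) 0 = \<zero>" "gamma_mat R x y a (Suc 0) (Suc 0) = y"
  unfolding gamma_mat_def by simp_all

lemma mat_carrier_gamma:
  "x \<in> carrier R \<Longrightarrow> y \<in> carrier R \<Longrightarrow> a \<in> carrier R \<Longrightarrow> mat_carrier R 2 2 (gamma_mat R x y a)"
  unfolding mat_carrier_def gamma_mat_def by auto

lemma eta_mat_eq_gamma_mat: "eta_mat R x y a = gamma_mat R y x (\<ominus> a)"
  unfolding eta_mat_def gamma_mat_def by simp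

lemma mat_image_gamma_iff:
  assumes "x \<in> carrier R" "y \<in> carrier R" "a \<in> carrier R"
  shows "u \<in> mat_image R 2 2 (gamma_mat R x y a) \<longleftrightarrow>
    (\<exists>s\<in>carrier R. \<exists>t\<in>carrier R. u = vec2 R (x \<otimes> s \<oplus> a \<otimes> t) (y \<otimes> t))"
  using mat_image_2x2_iff[OF mat_carrier_gamma[OF assms]] assms by simp

lemma mat_image_gamma_transpose_iff:
  assumes "x \<in> carrier R" "y \<in> carrier R" "a \<in> carrier R"
  shows "u \<in> mat_image R 2 2 (mat_transpose (gamma_mat R x y a)) \<longleftrightarrow>
    (\<exists>s\<in>carrier R. \<exists>t\<in>carrier R. u = vec2 R (x \<otimes> s) (a \<otimes> s \<oplus> y \<otimes> t))"
  using mat_image_2x2_iff[OF mat_carrier_transpose[OF mat_carrier_gamma[OF assms]]] assms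
  by (simp add: mat_transpose_def)

lemma mat_app_gamma:
  "x \<in> carrier R \<Longrightarrow> y \<in> carrier R \<Longrightarrow> a \<in> carrier R \<Longrightarrow> p \<in> carrier R \<Longrightarrow> q \<in> carrier R \<Longrightarrow>
    mat_app R 2 2 (gamma_mat R x y a) (vec2 R p q) = vec2 R (x \<otimes> p \<oplus> a \<otimes> q) (y \<otimes> q)"
  using mat_carrier_gamma[of x y a] by simp

lemma mat_app_gamma_transpose:
  "x \<in> carrier R \<Longrightarrow> y \<in> carrier R \<Longrightarrow> a \<in> carrier R \<Longrightarrow> p \<in> carrier R \<Longrightarrow> q \<in> carrier R \<Longrightarrow>
    mat_app R 2 2 (mat_transpose (gamma_mat R x y a)) (vec2 R p q) = vec2 R (x \<otimes> p) (a \<otimes> p \<oplus> y \<otimes> q)"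
  using mat_carrier_transpose[OF mat_carrier_gamma[of x y a]] by (simp add: mat_transpose_def)

lemma mat_kernel_gamma:
  assumes xy: "exact_zd_pair R x y" and a: "a \<in> carrier R"
  shows "mat_kernel R (gamma_mat R x y a) = mat_image R 2 2 (gamma_mat R y x (\<ominus> a))"
proof (intro equalityI subsetI)
  have x: "x \<in> carrier R" and y: "y \<in> carrier R"
    using exact_zd_pair_carrier[OF xy] by auto
  fix v assume v: "v \<in> mat_kernel R (gamma_mat R x y a)"
  obtain p q where pq: "p \<in> carrier R" "q \<in> carrier R" and v_pq: "v = vec2 R p q"
    using v unfolding mat_kernel_def by (auto elim: vecs2_cases)
  have p: "x \<otimes> p \<oplus> a \<otimes> q = \<zero>" and q: "y \<otimes> q = \<zero>"
    using v unfolding mat_kernel_def v_pq by (simp_all add: mat_app_gamma x y a pq vzero_eq_vec2)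
  obtain t where t: "t \<in> carrier R" "q = t \<otimes> x"
    using q exact_zd_pair_mult_eq_zero_iff[OF exact_zd_pair_sym[OF xy] pq(2)] by blast
  have "x \<otimes> (p \<oplus> a \<otimes> t) = x \<otimes> p \<oplus> a \<otimes> (t \<otimes> x)"
    using x a pq t by algebra
  then obtain s where s: "s \<in> carrier R" "p \<oplus> a \<otimes> t = s \<otimes> y"
    using p t exact_zd_pair_mult_eq_zero_iff[OF xy, of "p \<oplus> a \<otimes> t"] pq a by auto
  have "p = (p \<oplus> a \<otimes> t) \<oplus> \<ominus> a \<otimes> t"
    using pq a t by algebra
  then have "p = y \<otimes> s \<oplus> \<ominus> a \<otimes> t"
    using s y by (simp add: m_comm)
  moreover have "q = x \<otimes> t"
    using t x by (simp add: m_comm)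
  ultimately show "v \<in> mat_image R 2 2 (gamma_mat R y x (\<ominus> a))"
    unfolding mat_image_gamma_iff[OF y x a_inv_closed[OF a]] v_pq using s t by auto
next
  have x: "x \<in> carrier R" and y: "y \<in> carrier R"
    using exact_zd_pair_carrier[OF xy] by auto
  fix v assume "v \<in> mat_image R 2 2 (gamma_mat R y x (\<ominus> a))"
  then obtain s t where st: "s \<in> carrier R" "t \<in> carrier R"
    and v_st: "v = vec2 R (y \<otimes> s \<oplus> \<ominus> a \<otimes> t) (x \<otimes> t)"
    unfolding mat_image_gamma_iff[OF y x a_inv_closed[OF a]] by auto
  have "x \<otimes> (y \<otimes> s \<oplus> \<ominus> a \<otimes> t) \<oplus> a \<otimes> (x \<otimes> t) = (x \<otimes> y) \<otimes> s"
    using x y a st by algebra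
  moreover have "y \<otimes> (x \<otimes> t) = (x \<otimes> y) \<otimes> t"
    using x y st by algebra
  ultimately show "v \<in> mat_kernel R (gamma_mat R x y a)"
    unfolding mat_kernel_def v_st using exact_zd_pair_mult_zero[OF xy] x y a st
    by (simp add: mat_app_gamma vzero_eq_vec2)
qed

lemma mat_kernel_gamma_transpose:
  assumes xy: "exact_zd_pair R x y" and a: "a \<in> carrier R"
  shows "mat_kernel R (mat_transpose (gamma_mat R x y a)) = mat_image R 2 2 (mat_transpose (gamma_mat R y x (\<ominus> a)))"
proof (intro equalityI subsetI)
  have x: "x \<in> carrier R" and y: "y \<in> carrier R"
    using exact_zd_pair_carrier[OF xy] by auto
  fix v assume v: "v \<in> mat_kernel R (mat_transpose (gamma_mat R x y a))"
  obtain p q where pq: "p \<in> carrier R" "q \<in> carrier R" and v_pq: "v = vec2 R p q"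
    using v unfolding mat_kernel_def by (auto elim: vecs2_cases)
  have p: "x \<otimes> p = \<zero>" and q: "a \<otimes> p \<oplus> y \<otimes> q = \<zero>"
    using v unfolding mat_kernel_def v_pq by (simp_all add: mat_app_gamma_transpose x y a pq vzero_eq_vec2)
  obtain s where s: "s \<in> carrier R" "p = s \<otimes> y"
    using p exact_zd_pair_mult_eq_zero_iff[OF xy pq(1)] by blast
  have "y \<otimes> (a \<otimes> s \<oplus> q) = a \<otimes> (s \<otimes> y) \<oplus> y \<otimes> q"
    using y a pq s by algebra
  then obtain t where t: "t \<in> carrier R" "a \<otimes> s \<oplus> q = t \<otimes> x"
    using q s exact_zd_pair_mult_eq_zero_iff[OF exact_zd_pair_sym[OF xy], of "a \<otimes> s \<oplus> q"] pq a by auto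
  have "q = (a \<otimes> s \<oplus> q) \<oplus> \<ominus> a \<otimes> s"
    using pq a s by algebra
  then have "q = \<ominus> a \<otimes> s \<oplus> x \<otimes> t"
    using t x a s by (simp add: m_comm a_comm)
  moreover have "p = y \<otimes> s"
    using s y by (simp add: m_comm)
  ultimately show "v \<in> mat_image R 2 2 (mat_transpose (gamma_mat R y x (\<ominus> a)))"
    unfolding mat_image_gamma_transpose_iff[OF y x a_inv_closed[OF a]] v_pq using s t by auto
next
  have x: "x \<in> carrier R" and y: "y \<in> carrier R"
    using exact_zd_pair_carrier[OF xy] by auto
  fix v assume "v \<in> mat_image R 2 2 (mat_transpose (gamma_mat R y x (\<ominus> a)))"
  then obtain s t where st: "s \<in> carrier R" "t \<in> carrier R"
    and v_st: "v = vec2 R (y \<otimes> s) (\<ominus> a \<otimes> s \<oplus> x \<otimes> t)"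
    unfolding mat_image_gamma_transpose_iff[OF y x a_inv_closed[OF a]] by auto
  have "x \<otimes> (y \<otimes> s) = (x \<otimes> y) \<otimes> s"
    using x y st by algebra
  moreover have "a \<otimes> (y \<otimes> s) \<oplus> y \<otimes> (\<ominus> a \<otimes> s \<oplus> x \<otimes> t) = (x \<otimes> y) \<otimes> t"
    using x y a st by algebra
  ultimately show "v \<in> mat_kernel R (mat_transpose (gamma_mat R x y a))"
    unfolding mat_kernel_def v_st using exact_zd_pair_mult_zero[OF xy] x y a st
    by (simp add: mat_app_gamma_transpose vzero_eq_vec2)
qed

lemma exact_matrix_pair_gamma_eta:
  assumes xy: "exact_zd_pair R x y" and a: "a \<in> carrier R"
  shows "exact_matrix_pair R (gamma_mat R x y a) (eta_mat R x y a)"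
proof -
  have x: "x \<in> carrier R" and y: "y \<in> carrier R"
    using exact_zd_pair_carrier[OF xy] by auto
  have "gamma_mat R x y a = gamma_mat R x y (\<ominus> (\<ominus> a))"
    using a by simp
  then show ?thesis
    unfolding exact_matrix_pair_def exact_matrix_pair_axioms_def eta_mat_eq_gamma_mat
    using mat_kernel_gamma[OF xy a] mat_kernel_gamma[OF exact_zd_pair_sym[OF xy] a_inv_closed[OF a]]
      mat_kernel_gamma_transpose[OF xy a]
      mat_kernel_gamma_transpose[OF exact_zd_pair_sym[OF xy] a_inv_closed[OF a]]
      mat_carrier_gamma x y a is_cring
    by auto
qed

end

definition vrot :: "('a, 'b) ring_scheme \<Rightarrow> (nat \<Rightarrow> 'a) \<Rightarrow> nat \<Rightarrow> 'a" where
  "vrot R v = vec2 R (v 1) (\<ominus>\<^bsub>R\<^esub> (v 0))"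

context cring
begin

lemma vrot_vec2 [simp]: "vrot R (vec2 R p q) = vec2 R q (\<ominus> p)"
  unfolding vrot_def by simp

lemma vrot_in_vecs [simp]: "v \<in> vecs R 2 \<Longrightarrow> vrot R v \<in> vecs R 2"
  by (elim vecs2_cases) simp

lemma vrot_vadd: "v \<in> vecs R 2 \<Longrightarrow> w \<in> vecs R 2 \<Longrightarrow> vrot R (vadd R v w) = vadd R (vrot R v) (vrot R w)"
  by (elim vecs2_cases) (simp add: minus_add)

lemma vrot_vsmult: "r \<in> carrier R \<Longrightarrow> v \<in> vecs R 2 \<Longrightarrow> vrot R (vsmult R r v) = vsmult R r (vrot R v)"
  by (elim vecs2_cases) (simp add: r_minus)

lemma vrot_image: "vrot R ` vecs R 2 = vecs R 2"
proof
  show "vecs R 2 \<subseteq> vrot R ` vecs R 2"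
  proof
    fix w assume "w \<in> vecs R 2"
    then obtain p q where "p \<in> carrier R" "q \<in> carrier R" "w = vec2 R p q"
      by (rule vecs2_cases)
    then show "w \<in> vrot R ` vecs R 2"
      by (intro image_eqI[where x="vec2 R (\<ominus> q) p"]) auto
  qed
qed auto

lemma presentation_vrot:
  assumes eps: "presentation R D' N eps" and D: "mat_carrier R 2 2 D"
    and image: "\<And>v. v \<in> vecs R 2 \<Longrightarrow> vrot R v \<in> mat_image R 2 2 D' \<longleftrightarrow> v \<in> mat_image R 2 2 D"
  shows "presentation R D N (\<lambda>v. eps (vrot R v))"
proof -
  have "(\<lambda>v. eps (vrot R v)) ` vecs R 2 = eps ` vrot R ` vecs R 2"
    by (simp add: image_image)
  then have "(\<lambda>v. eps (vrot R v)) ` vecs R 2 = carrier N"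
    using eps unfolding presentation_def vrot_image by simp
  moreover have "eps (vrot R v) = \<zero>\<^bsub>N\<^esub> \<longleftrightarrow> v \<in> mat_image R 2 2 D" if "v \<in> vecs R 2" for v
    using eps image[OF that] vrot_in_vecs[OF that] unfolding presentation_def by blast
  then have "{v \<in> vecs R 2. eps (vrot R v) = \<zero>\<^bsub>N\<^esub>} = mat_image R 2 2 D"
    using mat_image_subset_vecs[OF D] by blast
  ultimately show ?thesis
    using D presentation_linear[OF eps]
    unfolding presentation_def linear_map_def by (auto simp: vrot_vadd vrot_vsmult)
qed

text \<open>\<open>vrot\<close> is multiplication by \<open>J = (0 1; -1 0)\<close>, and \<open>J \<gamma>\<^sub>a = \<eta>\<^sub>a\<^sup>T J\<close>.\<close>

lemma vrot_in_image_eta_transpose_iff: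
  assumes x: "x \<in> carrier R" and y: "y \<in> carrier R" and a: "a \<in> carrier R" and v: "v \<in> vecs R 2"
  shows "vrot R v \<in> mat_image R 2 2 (mat_transpose (eta_mat R x y a)) \<longleftrightarrow> v \<in> mat_image R 2 2 (gamma_mat R x y a)"
proof -
  obtain p q where pq: "p \<in> carrier R" "q \<in> carrier R" and v_pq: "v = vec2 R p q"
    using v by (rule vecs2_cases)
  have "vrot R v \<in> mat_image R 2 2 (mat_transpose (eta_mat R x y a)) \<longleftrightarrow>
      (\<exists>s\<in>carrier R. \<exists>t\<in>carrier R. q = y \<otimes> s \<and> \<ominus> p = \<ominus> a \<otimes> s \<oplus> x \<otimes> t)"
    unfolding eta_mat_eq_gamma_mat mat_image_gamma_transpose_iff[OF y x a_inv_closed[OF a]] v_pq by simp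
  also have "\<dots> \<longleftrightarrow> (\<exists>s\<in>carrier R. \<exists>t\<in>carrier R. p = x \<otimes> s \<oplus> a \<otimes> t \<and> q = y \<otimes> t)"
  proof
    assume "\<exists>s\<in>carrier R. \<exists>t\<in>carrier R. q = y \<otimes> s \<and> \<ominus> p = \<ominus> a \<otimes> s \<oplus> x \<otimes> t"
    then obtain s t where st: "s \<in> carrier R" "t \<in> carrier R" "q = y \<otimes> s" "\<ominus> p = \<ominus> a \<otimes> s \<oplus> x \<otimes> t"
      by blast
    have "p = \<ominus> (\<ominus> p)"
      using pq by simp
    also have "\<dots> = x \<otimes> (\<ominus> t) \<oplus> a \<otimes> s"
      unfolding st(4) using x a st by algebra
    finally show "\<exists>s\<in>carrier R. \<exists>t\<in>carrier R. p = x \<otimes> s \<oplus> a \<otimes> t \<and> q = y \<otimes> t"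
      using st by blast
  next
    assume "\<exists>s\<in>carrier R. \<exists>t\<in>carrier R. p = x \<otimes> s \<oplus> a \<otimes> t \<and> q = y \<otimes> t"
    then obtain s t where st: "s \<in> carrier R" "t \<in> carrier R" "p = x \<otimes> s \<oplus> a \<otimes> t" "q = y \<otimes> t"
      by blast
    have "\<ominus> p = \<ominus> a \<otimes> t \<oplus> x \<otimes> (\<ominus> s)"
      unfolding st(3) using x a st by algebra
    then show "\<exists>s\<in>carrier R. \<exists>t\<in>carrier R. q = y \<otimes> s \<and> \<ominus> p = \<ominus> a \<otimes> s \<oplus> x \<otimes> t"
      using st by blast
  qed
  also have "\<dots> \<longleftrightarrow> v \<in> mat_image R 2 2 (gamma_mat R x y a)"
    unfolding mat_image_gamma_iff[OF x y a] v_pq by simp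
  finally show ?thesis .
qed

lemma G_isomorphic_Dual_H:
  assumes xy: "exact_zd_pair R x y" and a: "a \<in> carrier R"
  shows "mod_isomorphic R (G_mod R x y a) (Dual R (H_mod R x y a))"
proof -
  have x: "x \<in> carrier R" and y: "y \<in> carrier R"
    using exact_zd_pair_carrier[OF xy] by auto
  interpret exact_matrix_pair R "eta_mat R x y a" "gamma_mat R x y a"
    by (rule exact_matrix_pair_swap[OF exact_matrix_pair_gamma_eta[OF xy a]])
  have "presentation R (gamma_mat R x y a) (Dual R (H_mod R x y a))
      (\<lambda>v. dual_cover R (eta_mat R x y a) (gamma_mat R x y a) (vrot R v))"
    unfolding H_mod_def
    using presentation_vrot[OF presentation_Dual_coker mat_carrier_gamma[OF x y a]]
      vrot_in_image_eta_transpose_iff[OF x y a] .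
  then show ?thesis
    unfolding G_mod_def using coker_isomorphic_of_presentation module_Dual[OF module_coker_D]
    by (simp add: H_mod_def)
qed

end

theorem proposition3p5:
  fixes R :: "('a, 'b) ring_scheme" and x y a :: 'a
  assumes "cring R" and "noetherian_ring R" and "local_ring R"
    and "exact_zd_pair R x y" and "a \<in> carrier R"
  shows "totally_reflexive R (G_mod R x y a) \<and> totally_reflexive R (H_mod R x y a) \<and>
         mod_isomorphic R (G_mod R x y a) (Dual R (H_mod R x y a)) \<and>
         mod_isomorphic R (H_mod R x y a) (Dual R (G_mod R x y a))"
proof -
  interpret cring R by fact
  note xy = \<open>exact_zd_pair R x y\<close> and a = \<open>a \<in> carrier R\<close>
  have pair: "exact_matrix_pair R (gamma_mat R x y a) (eta_mat R x y a)"
    by (rule exact_matrix_pair_gamma_eta[OF xy a])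
  have swap: "G_mod R y x (\<ominus>\<^bsub>R\<^esub> a) = H_mod R x y a" "H_mod R y x (\<ominus>\<^bsub>R\<^esub> a) = G_mod R x y a"
    by (simp_all add: G_mod_def H_mod_def eta_mat_eq_gamma_mat a)
  show ?thesis
    using exact_matrix_pair.coker_totally_reflexive[OF pair]
      exact_matrix_pair.coker_totally_reflexive[OF exact_matrix_pair_swap[OF pair]]
      G_isomorphic_Dual_H[OF xy a] G_isomorphic_Dual_H[OF exact_zd_pair_sym[OF xy] a_inv_closed[OF a]]
    unfolding swap G_mod_def[symmetric] H_mod_def[symmetric] by blast
qed

end
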